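(* Assume $\overline{c}>p$. Then there exist constants $K_2>0$ and $K_3>0$ such that $$V(x_2,c)-V(x_1,c)\le\left[K_2+\frac{K_3}{c-p}\right](x_2-x_1)$$ for all $0\le x_1\le x_2$ and $p<c\le\overline{c}$.
   Context: Cramér–Lundberg model: the uncontrolled surplus is $X_t=x+pt-\sum_{i=1}^{N_t}U_i$, where $x\ge0$ is the initial surplus, $p>0$ the premium rate, $N_t$ a Poisson process with intensity $\beta>0$, and the claims $U_i$ are i.i.d. positive random variables, independent of $N$, with continuous distribution function $F$; $p>\beta\mathbb{E}[U_1]$. Standing assumption (A1): $F$ is globally Lipschitz, $0\le F(y)-F(x)\le K(y-x)$ for $x<y$. Let $(\mathcal{F}_t)$ be the completed filtration generated by $X$. Fix $\overline{c}>0$ and $q>0$. $\Pi_{x,c,\overline{c}}$ is the set of càdlàg, adapted, non-decreasing processes $C$ with $c\le C_t\le\overline{c}$; $X^C_t=X_t-\int_0^tC_sds$ ($X_0=x$), $\tau=\inf\{t\ge0:X^C_t<0\}$, $J(x;C)=\mathbb{E}[\int_0^\tau e^{-qs}C_sds]$, $V(x,c)=\sup_{C\in\Pi_{x,c,\overline{c}}}J(x;C)$. *)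

theory Defs
  imports "HOL-Probability.Probability"
begin

text \<open>E n : i.i.d. Exp(beta) inter-arrival times, so the claim arrival times are
  S_n = E_0 + ... + E_(n-1) (n >= 1) and N_t = number of arrivals in [0,t] is a
  Poisson process with intensity beta.  U n : the claim sizes (claim number n+1).\<close>

definition arrival :: "(nat \<Rightarrow> 'a \<Rightarrow> real) \<Rightarrow> nat \<Rightarrow> 'a \<Rightarrow> real" where
  "arrival E n \<omega> = (\<Sum>i<n. E i \<omega>)"

definition Npoisson :: "(nat \<Rightarrow> 'a \<Rightarrow> real) \<Rightarrow> real \<Rightarrow> 'a \<Rightarrow> nat" where
  "Npoisson E t \<omega> = card {n::nat. 1 \<le> n \<and> arrival E n \<omega> \<le> t}"

definition surplus :: "real \<Rightarrow> real \<Rightarrow> (nat \<Rightarrow> 'a \<Rightarrow> real) \<Rightarrow> (nat \<Rightarrow> 'a \<Rightarrow> real)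
    \<Rightarrow> real \<Rightarrow> 'a \<Rightarrow> real" where
  "surplus x p E U t \<omega> = x + p * t - (\<Sum>i<Npoisson E t \<omega>. U i \<omega>)"

definition filt :: "'a measure \<Rightarrow> (real \<Rightarrow> 'a \<Rightarrow> real) \<Rightarrow> real \<Rightarrow> 'a measure" where
  "filt M X t = sigma (space M)
     ({X s -` B \<inter> space M | s B. 0 \<le> s \<and> s \<le> t \<and> B \<in> sets borel} \<union> null_sets M)"

definition admissible :: "'a measure \<Rightarrow> (real \<Rightarrow> 'a \<Rightarrow> real) \<Rightarrow> real \<Rightarrow> real
    \<Rightarrow> (real \<Rightarrow> 'a \<Rightarrow> real) set" where
  "admissible M X c cbar = {C.
     (\<forall>t\<ge>0. (\<lambda>\<omega>. C t \<omega>) \<in> borel_measurable (filt M X t)) \<and>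
     (\<forall>\<omega>\<in>space M.
        (\<forall>t\<ge>0. c \<le> C t \<omega> \<and> C t \<omega> \<le> cbar) \<and>
        mono_on {0..} (\<lambda>t. C t \<omega>) \<and>
        (\<forall>t\<ge>0. continuous (at_right t) (\<lambda>s. C s \<omega>)) \<and>
        (\<forall>t>0. \<exists>l. ((\<lambda>s. C s \<omega>) \<longlongrightarrow> l) (at_left t)))}"

definition ctrl_surplus :: "(real \<Rightarrow> 'a \<Rightarrow> real) \<Rightarrow> (real \<Rightarrow> 'a \<Rightarrow> real) \<Rightarrow> real \<Rightarrow> 'a \<Rightarrow> real" where
  "ctrl_surplus X C t \<omega> = X t \<omega> - integral {0..t} (\<lambda>s. C s \<omega>)"

text \<open>Ruin time tau = inf {t >= 0. X^C_t < 0} (= infinity if never ruined).\<close>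
definition ruin_time :: "(real \<Rightarrow> 'a \<Rightarrow> real) \<Rightarrow> (real \<Rightarrow> 'a \<Rightarrow> real) \<Rightarrow> 'a \<Rightarrow> ereal" where
  "ruin_time X C \<omega> = Inf (ereal ` {t. 0 \<le> t \<and> ctrl_surplus X C t \<omega> < 0})"

definition Jval :: "'a measure \<Rightarrow> real \<Rightarrow> (real \<Rightarrow> 'a \<Rightarrow> real) \<Rightarrow> (real \<Rightarrow> 'a \<Rightarrow> real) \<Rightarrow> ennreal" where
  "Jval M q X C = (\<integral>\<^sup>+ \<omega>. (\<integral>\<^sup>+ s. ennreal (indicator {s. 0 \<le> s \<and> ereal s < ruin_time X C \<omega>} s
        * exp (- q * s) * C s \<omega>) \<partial>lborel) \<partial>M)"

text \<open>Value function V(x,c) = sup over Pi_{x,c,cbar} of J(x;C) (finite, <= cbar/q).\<close>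
definition Vfun :: "'a measure \<Rightarrow> real \<Rightarrow> real \<Rightarrow> real \<Rightarrow> (nat \<Rightarrow> 'a \<Rightarrow> real)
    \<Rightarrow> (nat \<Rightarrow> 'a \<Rightarrow> real) \<Rightarrow> real \<Rightarrow> real \<Rightarrow> real" where
  "Vfun M p q cbar E U x c =
     enn2real (SUP C \<in> admissible M (surplus x p E U) c cbar. Jval M q (surplus x p E U) C)"

end

theory Submission
  imports Defs
begin

(* The admissible strategies do not depend on the initial surplus x: the surplus processes for
   different x differ by a constant, so they generate the same filtration. Fix a strategy C with
   C >= c > p. Since claims only accumulate, the controlled surplus started at x2 at time u + d is
   at most the one started at x1 at time u plus (x2 - x1) - (c - p) d; hence if the latter is
   ruined at u, the former is ruined by u + (x2 - x1)/(c - p). As e^(-qs) C_s <= cbar, the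
   discounted dividends of the two paths differ by at most cbar (x2 - x1)/(c - p). Taking
   expectations and suprema gives the bound with K3 = cbar and any K2 > 0. *)

(* Unlike nn_integral_add, f need not be measurable: the expected discounted dividends integrate
   a path functional whose measurability in the sample point is not available. *)
lemma nn_integral_add_simple_le:
  assumes h: "simple_function M h"
  shows "(\<integral>\<^sup>+x. f x + h x \<partial>M) \<le> integral\<^sup>N M f + integral\<^sup>N M h"
proof -
  have "integral\<^sup>S M g \<le> integral\<^sup>N M f + integral\<^sup>N M h"
    if g: "simple_function M g" "g \<le> (\<lambda>x. f x + h x)" "\<forall>x. g x < top" for g
  proof -
    have gh: "simple_function M (\<lambda>x. g x - h x)" using simple_function_compose2[OF g(1) h] .
    have "integral\<^sup>S M g = integral\<^sup>N M g" by (simp add: nn_integral_eq_simple_integral g)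
    also have "\<dots> \<le> (\<integral>\<^sup>+x. (g x - h x) + h x \<partial>M)"
      by (intro nn_integral_mono) (use diff_add_self_ennreal in auto)
    also have "\<dots> = (\<integral>\<^sup>+x. (g x - h x) \<partial>M) + integral\<^sup>N M h"
      by (rule nn_integral_add) (auto intro: borel_measurable_simple_function gh h)
    also have "(\<integral>\<^sup>+x. (g x - h x) \<partial>M) \<le> integral\<^sup>N M f"
    proof (intro nn_integral_mono)
      fix x
      have "g x \<le> f x + h x" "g x < top" using g(2,3) by (auto simp: le_fun_def)
      then show "g x - h x \<le> f x" by (auto simp: ennreal_minus_le_iff add.commute)
    qed
    finally show ?thesis by (simp add: add_right_mono)
  qed
  then show ?thesis
    by (subst nn_integral_def_finite) (auto intro!: SUP_least)
qed

lemma erlang_CDF_tendsto_0: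
  assumes "0 < l" "0 \<le> t"
  shows "(\<lambda>n. erlang_CDF n l t) \<longlonglongrightarrow> 0"
proof -
  have "(\<lambda>n. (l * t) ^ n / fact n) sums exp (l * t)"
    using exp_converges[of "l * t"] by (simp add: divide_inverse mult.commute)
  then have "(\<lambda>n. 1 - (\<Sum>j\<le>n. (l * t) ^ j / fact j) * exp (- l * t))
      \<longlonglongrightarrow> 1 - exp (l * t) * exp (- l * t)"
    by (intro tendsto_intros) (simp add: sums_def_le)
  moreover have "erlang_CDF n l t = 1 - (\<Sum>j\<le>n. (l * t) ^ j / fact j) * exp (- l * t)" for n
    using assms by (simp add: erlang_CDF_def sum_distrib_right)
  ultimately show ?thesis by (simp add: exp_minus)
qed

lemma (in prob_space) indep_vars_reindex:
  assumes ind: "indep_vars M' X (f ` I)" and inj: "inj_on f I"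
  shows "indep_vars (\<lambda>i. M' (f i)) (\<lambda>i. X (f i)) I"
proof -
  have sets: "indep_sets (\<lambda>k. {X k -` A \<inter> space M |A. A \<in> sets (M' k)}) (f ` I)"
    using ind by (simp add: indep_vars_def2)
  have "indep_sets (\<lambda>i. {X (f i) -` A \<inter> space M |A. A \<in> sets (M' (f i))}) I"
    unfolding indep_sets_def
  proof (intro conjI ballI allI impI)
    fix J A assume J: "J \<subseteq> I" "J \<noteq> {}" "finite J"
      and A: "A \<in> (\<Pi> j\<in>J. {X (f j) -` B \<inter> space M |B. B \<in> sets (M' (f j))})"
    have inj_J: "inj_on f J" using inj J(1) by (rule inj_on_subset)
    have iv: "inv_into I f (f j) = j" if "j \<in> J" for j using inj J(1) that by auto
    let ?A = "\<lambda>k. A (inv_into I f k)"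
    have "prob (\<Inter>k\<in>f ` J. ?A k) = (\<Prod>k\<in>f ` J. prob (?A k))"
    proof (rule sets[unfolded indep_sets_def, THEN conjunct2, rule_format])
      show "?A \<in> (\<Pi> k\<in>f ` J. {X k -` B \<inter> space M |B. B \<in> sets (M' k)})"
        using A by (auto simp: iv Pi_iff)
    qed (use J in auto)
    then show "prob (\<Inter>j\<in>J. A j) = (\<Prod>j\<in>J. prob (A j))"
      by (simp add: prod.reindex[OF inj_J] iv cong: INF_cong)
  qed (use sets in \<open>simp add: indep_sets_def\<close>)
  with ind show ?thesis by (simp add: indep_vars_def2)
qed

lemma (in prob_space) arrival_erlang_distributed:
  assumes ind: "indep_vars (\<lambda>_. borel) E UNIV"
    and exp: "\<And>n. distributed M lborel (E n) (exponential_density \<beta>)" and "0 < \<beta>"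
  shows "distributed M lborel (arrival E (Suc n)) (erlang_density n \<beta>)"
proof -
  have "distributed M lborel (\<lambda>\<omega>. \<Sum>i\<in>{..<Suc n}. E i \<omega>) (erlang_density (card {..<Suc n} - 1) \<beta>)"
    by (rule exponential_distributed_sum) (use assms in \<open>auto intro: indep_vars_subset\<close>)
  then show ?thesis by (simp add: arrival_def[abs_def])
qed

lemma (in prob_space) AE_arrival_gt:
  assumes ind: "indep_vars (\<lambda>_. borel) E UNIV"
    and exp: "\<And>n. distributed M lborel (E n) (exponential_density \<beta>)" and "0 < \<beta>" "0 \<le> t"
  shows "AE \<omega> in M. \<exists>n. t < arrival E n \<omega>"
proof -
  have [measurable]: "E n \<in> borel_measurable M" for n
    using distributed_measurable[OF exp[of n]] by simp
  let ?B = "{\<omega>\<in>space M. \<forall>n. arrival E (Suc n) \<omega> \<le> t}"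
  have B: "?B \<in> sets M" unfolding arrival_def by measurable
  have "measure M ?B \<le> erlang_CDF n \<beta> t" for n
  proof -
    have "measure M ?B \<le> prob {\<omega>\<in>space M. arrival E (Suc n) \<omega> \<le> t}"
      by (rule finite_measure_mono) (auto simp: arrival_def)
    also have "\<dots> = erlang_CDF n \<beta> t"
      by (rule erlang_distributed_le[OF arrival_erlang_distributed[OF ind exp]]) (use assms in auto)
    finally show ?thesis .
  qed
  then have "measure M ?B \<le> 0"
    using erlang_CDF_tendsto_0[OF \<open>0 < \<beta>\<close> \<open>0 \<le> t\<close>]
    by (intro tendsto_lowerbound[where F=sequentially]) (auto intro: always_eventually)
  then have "?B \<in> null_sets M"
    using B by (simp add: emeasure_eq_measure null_sets_def measure_le_0_iff)
  then show ?thesis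
    by (rule AE_I') (auto simp: not_less)
qed

lemma finite_arrivals_le:
  assumes "\<And>i. 0 \<le> E i \<omega>" "t < arrival E n \<omega>"
  shows "finite {k. arrival E k \<omega> \<le> t}"
proof (rule finite_subset)
  have "arrival E n \<omega> \<le> arrival E k \<omega>" if "n \<le> k" for k
    unfolding arrival_def using assms(1) that by (intro sum_mono2) auto
  then show "{k. arrival E k \<omega> \<le> t} \<subseteq> {..<n}"
    using assms(2) by (fastforce simp: not_less[symmetric])
qed simp

lemma (in prob_space) AE_finite_arrivals:
  assumes ind: "indep_vars (\<lambda>_. borel) E UNIV"
    and exp: "\<And>n. distributed M lborel (E n) (exponential_density \<beta>)" and "0 < \<beta>"
  shows "AE \<omega> in M. \<forall>t. finite {n. arrival E n \<omega> \<le> t}"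
proof -
  have "AE \<omega> in M. 0 \<le> E i \<omega>" for i
  proof -
    have "prob {\<omega>\<in>space M. E i \<omega> \<le> 0} = 0"
      using exponential_distributedD_le[OF exp[of i] _ \<open>0 < \<beta>\<close>, of 0] by simp
    then have "{\<omega>\<in>space M. E i \<omega> \<le> 0} \<in> null_sets M"
      using distributed_measurable[OF exp[of i]]
      by (simp add: emeasure_eq_measure null_sets_def)
    then show ?thesis by (rule AE_I') auto
  qed
  then have pos: "AE \<omega> in M. \<forall>i. 0 \<le> E i \<omega>"
    unfolding AE_all_countable by blast
  have "AE \<omega> in M. \<forall>T::nat. \<exists>n. real T < arrival E n \<omega>"
    by (subst AE_all_countable) (auto intro: AE_arrival_gt[OF ind exp \<open>0 < \<beta>\<close>])
  with pos show ?thesis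
  proof eventually_elim
    case (elim \<omega>)
    show ?case
    proof
      fix t :: real
      obtain T :: nat where "t \<le> real T" using real_arch_simple by blast
      with elim(2) obtain n where "t < arrival E n \<omega>" by (meson le_less_trans)
      with elim(1) show "finite {n. arrival E n \<omega> \<le> t}" by (intro finite_arrivals_le) auto
    qed
  qed
qed

lemma Npoisson_mono:
  assumes "finite {n. arrival E n \<omega> \<le> t}" "s \<le> t"
  shows "Npoisson E s \<omega> \<le> Npoisson E t \<omega>"
  unfolding Npoisson_def using assms by (intro card_mono) (auto elim: finite_subset)

lemma ctrl_surplus_shift_le:
  fixes C :: "real \<Rightarrow> 'a \<Rightarrow> real"
  assumes fin: "finite {n. arrival E n \<omega> \<le> u + d}" and U: "\<And>i. 0 \<le> U i \<omega>"
    and "0 \<le> u" "0 \<le> d"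
    and C_ge: "\<And>t. u \<le> t \<Longrightarrow> t \<le> u + d \<Longrightarrow> c \<le> C t \<omega>"
    and C_int: "(\<lambda>t. C t \<omega>) integrable_on {0..u + d}"
  shows "ctrl_surplus (surplus xb p E U) C (u + d) \<omega>
    \<le> ctrl_surplus (surplus xa p E U) C u \<omega> + (xb - xa) - (c - p) * d"
proof -
  have claims: "(\<Sum>i<Npoisson E u \<omega>. U i \<omega>) \<le> (\<Sum>i<Npoisson E (u + d) \<omega>. U i \<omega>)"
    using Npoisson_mono[OF fin, of u] U \<open>0 \<le> d\<close> by (intro sum_mono2) auto
  have split: "integral {0..u + d} (\<lambda>t. C t \<omega>)
      = integral {0..u} (\<lambda>t. C t \<omega>) + integral {u..u + d} (\<lambda>t. C t \<omega>)"
    using Henstock_Kurzweil_Integration.integral_combine[OF \<open>0 \<le> u\<close> _ C_int] \<open>0 \<le> d\<close> by simp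
  have "integral {u..u + d} (\<lambda>_. c) \<le> integral {u..u + d} (\<lambda>t. C t \<omega>)"
    using C_int \<open>0 \<le> u\<close> C_ge by (intro integral_le integrable_on_subinterval[OF C_int]) auto
  then have "c * d \<le> integral {u..u + d} (\<lambda>t. C t \<omega>)"
    using \<open>0 \<le> d\<close> by (simp add: mult.commute)
  with claims split show ?thesis
    unfolding ctrl_surplus_def surplus_def by (simp add: algebra_simps)
qed

lemma ruin_time_shift_le:
  fixes C :: "real \<Rightarrow> 'a \<Rightarrow> real"
  assumes fin: "\<And>t. finite {n. arrival E n \<omega> \<le> t}" and U: "\<And>i. 0 \<le> U i \<omega>"
    and C_ge: "\<And>t. 0 \<le> t \<Longrightarrow> c \<le> C t \<omega>" and C_mono: "mono_on {0..} (\<lambda>t. C t \<omega>)"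
    and "p < c" "xa \<le> xb"
  shows "ruin_time (surplus xb p E U) C \<omega>
    \<le> ruin_time (surplus xa p E U) C \<omega> + ereal ((xb - xa) / (c - p))"
proof -
  define d where "d = (xb - xa) / (c - p)"
  have "0 \<le> d" "(c - p) * d = xb - xa" using assms(5,6) by (auto simp: d_def)
  have "ruin_time (surplus xb p E U) C \<omega> \<le> ereal (u + d)"
    if "0 \<le> u" and ruined: "ctrl_surplus (surplus xa p E U) C u \<omega> < 0" for u
  proof -
    have "(\<lambda>t. C t \<omega>) integrable_on {0..u + d}"
      by (rule integrable_on_mono_on) (auto intro: mono_on_subset[OF C_mono])
    then have "ctrl_surplus (surplus xb p E U) C (u + d) \<omega>
        \<le> ctrl_surplus (surplus xa p E U) C u \<omega> + (xb - xa) - (c - p) * d"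
      by (intro ctrl_surplus_shift_le fin U C_ge) (use \<open>0 \<le> u\<close> \<open>0 \<le> d\<close> in auto)
    with ruined \<open>(c - p) * d = xb - xa\<close> have "ctrl_surplus (surplus xb p E U) C (u + d) \<omega> < 0"
      by simp
    then show ?thesis
      unfolding ruin_time_def using \<open>0 \<le> u\<close> \<open>0 \<le> d\<close> by (intro Inf_lower) auto
  qed
  then have "ruin_time (surplus xb p E U) C \<omega> - ereal d \<le> ruin_time (surplus xa p E U) C \<omega>"
    unfolding ruin_time_def[of "surplus xa p E U"]
    by (intro Inf_greatest) (auto simp: ereal_minus_le)
  then show ?thesis by (simp add: ereal_minus_le d_def)
qed

lemma nn_integral_indicator_less_le:
  fixes g :: "real \<Rightarrow> real" and \<sigma> \<tau> :: ereal
  assumes "\<sigma> \<le> \<tau> + ereal d" "0 \<le> d" "0 \<le> b" "\<And>s. 0 \<le> s \<Longrightarrow> g s \<le> b"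
  shows "(\<integral>\<^sup>+s. ennreal (indicator {s. 0 \<le> s \<and> ereal s < \<sigma>} s * g s) \<partial>lborel)
    \<le> (\<integral>\<^sup>+s. ennreal (indicator {s. 0 \<le> s \<and> ereal s < \<tau>} s * g s) \<partial>lborel)
      + ennreal (b * d)"
    (is "integral\<^sup>N _ ?f\<sigma> \<le> integral\<^sup>N _ ?f\<tau> + _")
proof (cases \<tau>)
  case (real r)
  define h where "h = (\<lambda>s. ennreal b * indicator {r..r + d} s)"
  have "?f\<sigma> s \<le> ?f\<tau> s + h s" for s
  proof (cases "0 \<le> s \<and> ereal s < \<sigma> \<and> \<not> ereal s < \<tau>")
    case True
    with real assms(1) have "ereal s < ereal (r + d)"
      by (metis order.strict_trans2 plus_ereal.simps(1))
    with True real have "r \<le> s" "s \<le> r + d" by auto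
    with True assms(4) show ?thesis by (simp add: h_def add_increasing ennreal_leI)
  qed (auto simp: indicator_def)
  then have "integral\<^sup>N lborel ?f\<sigma> \<le> (\<integral>\<^sup>+s. ?f\<tau> s + h s \<partial>lborel)"
    by (rule nn_integral_mono)
  also have "\<dots> \<le> integral\<^sup>N lborel ?f\<tau> + integral\<^sup>N lborel h"
    by (rule nn_integral_add_simple_le) (auto simp: h_def)
  also have "integral\<^sup>N lborel h = ennreal (b * d)"
    using assms(2,3) by (simp add: h_def nn_integral_cmult_indicator ennreal_mult)
  finally show ?thesis .
next
  case PInf
  then have "integral\<^sup>N lborel ?f\<sigma> \<le> integral\<^sup>N lborel ?f\<tau>"
    by (intro nn_integral_mono) (auto simp: indicator_def)
  then show ?thesis by (simp add: add_increasing2)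
next
  case MInf
  with assms(1) show ?thesis by (simp add: indicator_def)
qed

lemma Jval_le:
  assumes "prob_space M" "0 < q" "0 \<le> b"
    and C_le: "\<And>\<omega> s. \<omega> \<in> space M \<Longrightarrow> 0 \<le> s \<Longrightarrow> C s \<omega> \<le> b"
  shows "Jval M q X C \<le> ennreal (b / q)"
proof -
  interpret prob_space M by fact
  have "(\<integral>\<^sup>+s. ennreal (indicator {s. 0 \<le> s \<and> ereal s < ruin_time X C \<omega>} s
      * exp (- q * s) * C s \<omega>) \<partial>lborel) \<le> ennreal (b / q)" if "\<omega> \<in> space M" for \<omega>
  proof -
    let ?f = "\<lambda>s. indicator {s. 0 \<le> s \<and> ereal s < ruin_time X C \<omega>} s * exp (- q * s) * C s \<omega>"
    have "ennreal (?f s) \<le> ennreal (b / q) * ennreal (exponential_density q s)" for s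
    proof (cases "0 \<le> s")
      case True
      have "?f s \<le> exp (- q * s) * b"
        using C_le[OF that True] \<open>0 \<le> b\<close> by (auto simp: indicator_def)
      also have "\<dots> = b / q * exponential_density q s"
        using True \<open>0 < q\<close> by (simp add: exponential_density_def)
      finally show ?thesis
        using \<open>0 \<le> b\<close> \<open>0 < q\<close> by (simp add: ennreal_mult'[symmetric] ennreal_leI)
    qed (simp add: indicator_def)
    then have "(\<integral>\<^sup>+s. ennreal (?f s) \<partial>lborel)
        \<le> ennreal (b / q) * (\<integral>\<^sup>+s. ennreal (exponential_density q s) \<partial>lborel)"
      by (subst nn_integral_cmult[symmetric]) (auto intro: nn_integral_mono)
    also have "(\<integral>\<^sup>+s. ennreal (exponential_density q s) \<partial>lborel) = 1"
      using nn_integral_erlang_ith_moment[OF \<open>0 < q\<close>, of 0 0] by simp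
    finally show ?thesis by simp
  qed
  then have "Jval M q X C \<le> (\<integral>\<^sup>+\<omega>. ennreal (b / q) \<partial>M)"
    unfolding Jval_def by (intro nn_integral_mono) 
  then show ?thesis by (simp add: emeasure_space_1)
qed

lemma Jval_le_add:
  assumes "prob_space M" "0 \<le> q" "0 \<le> d" "0 \<le> b"
    and ruin: "AE \<omega> in M. ruin_time Y C \<omega> \<le> ruin_time X C \<omega> + ereal d"
    and C: "\<And>\<omega> s. \<omega> \<in> space M \<Longrightarrow> 0 \<le> s \<Longrightarrow> 0 \<le> C s \<omega> \<and> C s \<omega> \<le> b"
  shows "Jval M q Y C \<le> Jval M q X C + ennreal (b * d)"
proof -
  interpret prob_space M by fact
  let ?I = "\<lambda>Z \<omega>. \<integral>\<^sup>+s. ennreal (indicator {s. 0 \<le> s \<and> ereal s < ruin_time Z C \<omega>} s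
    * exp (- q * s) * C s \<omega>) \<partial>lborel"
  have "AE \<omega> in M. ?I Y \<omega> \<le> ?I X \<omega> + ennreal (b * d)"
    using ruin AE_space
  proof eventually_elim
    case (elim \<omega>)
    have "exp (- q * s) * C s \<omega> \<le> b" if "0 \<le> s" for s
      using C[OF elim(2) that] \<open>0 \<le> q\<close> that
      by (intro order.trans[OF mult_left_le_one_le]) auto
    then show ?case
      using nn_integral_indicator_less_le[OF elim(1) \<open>0 \<le> d\<close> \<open>0 \<le> b\<close>,
          of "\<lambda>s. exp (- q * s) * C s \<omega>"]
      by (simp add: mult.assoc)
  qed
  then have "Jval M q Y C \<le> (\<integral>\<^sup>+\<omega>. ?I X \<omega> + ennreal (b * d) \<partial>M)"
    unfolding Jval_def by (rule nn_integral_mono_AE)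
  also have "\<dots> \<le> Jval M q X C + (\<integral>\<^sup>+\<omega>. ennreal (b * d) \<partial>M)"
    unfolding Jval_def by (rule nn_integral_add_simple_le) simp
  finally show ?thesis by (simp add: emeasure_space_1)
qed

lemma filt_add_const: "filt M (\<lambda>t \<omega>. a + X t \<omega>) t = filt M X t"
proof -
  let ?G = "\<lambda>Y. {Y s -` B \<inter> space M | s B. 0 \<le> s \<and> s \<le> t \<and> B \<in> sets borel}"
  have shift: "(\<lambda>y::real. y + e) -` B \<in> sets borel" if "B \<in> sets borel" for e B
    using measurable_sets[OF _ that, of "\<lambda>y. y + e" borel] by simp
  have "?G (\<lambda>s \<omega>. a + X s \<omega>) = ?G X"
  proof (intro equalityI subsetI)
    fix A assume "A \<in> ?G (\<lambda>s \<omega>. a + X s \<omega>)"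
    then obtain s B where "A = (\<lambda>\<omega>. a + X s \<omega>) -` B \<inter> space M" "0 \<le> s" "s \<le> t" "B \<in> sets borel"
      by blast
    moreover have "(\<lambda>\<omega>. a + X s \<omega>) -` B = X s -` ((\<lambda>y. y + a) -` B)"
      by (auto simp: add.commute)
    ultimately show "A \<in> ?G X"
      using shift[of B a] by blast
  next
    fix A assume "A \<in> ?G X"
    then obtain s B where "A = X s -` B \<inter> space M" "0 \<le> s" "s \<le> t" "B \<in> sets borel"
      by blast
    moreover have "X s -` B = (\<lambda>\<omega>. a + X s \<omega>) -` ((\<lambda>y. y + - a) -` B)"
      by auto
    ultimately show "A \<in> ?G (\<lambda>s \<omega>. a + X s \<omega>)"
      using shift[of B "- a"] by blast
  qed
  then show ?thesis by (simp add: filt_def)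
qed

lemma admissible_surplus_eq:
  "admissible M (surplus x p E U) c cbar = admissible M (surplus 0 p E U) c cbar"
proof -
  have "surplus x p E U = (\<lambda>t \<omega>. x + surplus 0 p E U t \<omega>)"
    by (simp add: surplus_def fun_eq_iff)
  then have "filt M (surplus x p E U) t = filt M (surplus 0 p E U) t" for t
    by (simp only: filt_add_const)
  then show ?thesis by (simp only: admissible_def)
qed

lemma enn2real_SUP_le_add:
  fixes f g :: "'a \<Rightarrow> ennreal"
  assumes "\<And>x. x \<in> A \<Longrightarrow> f x \<le> g x + ennreal k" "(SUP x\<in>A. g x) < top" "0 \<le> k"
  shows "enn2real (SUP x\<in>A. f x) \<le> enn2real (SUP x\<in>A. g x) + k"
proof -
  have "(SUP x\<in>A. f x) \<le> (SUP x\<in>A. g x) + ennreal k"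
    using assms(1) by (intro SUP_least) (meson SUP_upper add_right_mono order_trans)
  then have "enn2real (SUP x\<in>A. f x) \<le> enn2real ((SUP x\<in>A. g x) + ennreal k)"
    by (rule enn2real_mono) (simp add: assms(2))
  also have "\<dots> = enn2real (SUP x\<in>A. g x) + k"
    using assms(2,3) by (simp add: enn2real_plus)
  finally show ?thesis .
qed

lemma Vfun_diff_le:
  assumes "prob_space M" "0 < q" "0 \<le> p" "p < c" "c \<le> cbar" "x1 \<le> x2"
    and fin: "AE \<omega> in M. \<forall>t. finite {n. arrival E n \<omega> \<le> t}"
    and U: "\<And>n \<omega>. \<omega> \<in> space M \<Longrightarrow> 0 \<le> U n \<omega>"
  shows "Vfun M p q cbar E U x2 c - Vfun M p q cbar E U x1 c \<le> cbar / (c - p) * (x2 - x1)"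
proof -
  interpret prob_space M by fact
  define A where "A = admissible M (surplus 0 p E U) c cbar"
  have A: "admissible M (surplus x p E U) c cbar = A" for x
    unfolding A_def by (rule admissible_surplus_eq)
  have C_bounds: "c \<le> C t \<omega> \<and> C t \<omega> \<le> cbar" "mono_on {0..} (\<lambda>t. C t \<omega>)"
    if "C \<in> A" "\<omega> \<in> space M" "0 \<le> t" for C \<omega> t
    using that by (auto simp: A_def admissible_def)
  have "Jval M q (surplus x2 p E U) C
      \<le> Jval M q (surplus x1 p E U) C + ennreal (cbar * ((x2 - x1) / (c - p)))" if "C \<in> A" for C
  proof (rule Jval_le_add)
    show "AE \<omega> in M. ruin_time (surplus x2 p E U) C \<omega>
        \<le> ruin_time (surplus x1 p E U) C \<omega> + ereal ((x2 - x1) / (c - p))"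
      using fin AE_space
      by eventually_elim (intro ruin_time_shift_le, use assms C_bounds[OF \<open>C \<in> A\<close>] in auto)
    show "0 \<le> C s \<omega> \<and> C s \<omega> \<le> cbar" if "\<omega> \<in> space M" "0 \<le> s" for \<omega> s
      using C_bounds[OF \<open>C \<in> A\<close> that] assms(3,4) by auto
  qed (use assms in auto)
  moreover have "(SUP C\<in>A. Jval M q (surplus x1 p E U) C) \<le> ennreal (cbar / q)"
    using assms C_bounds by (intro SUP_least Jval_le) auto
  then have "(SUP C\<in>A. Jval M q (surplus x1 p E U) C) < top"
    using le_less_trans by fastforce
  ultimately have "Vfun M p q cbar E U x2 c \<le> Vfun M p q cbar E U x1 c + cbar * ((x2 - x1) / (c - p))"
    unfolding Vfun_def A using assms by (intro enn2real_SUP_le_add) auto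
  then show ?thesis by simp
qed

theorem lemma9p3:
  fixes M :: "'a measure" and E U :: "nat \<Rightarrow> 'a \<Rightarrow> real"
    and F :: "real \<Rightarrow> real" and p \<beta> q cbar K :: real
  assumes "prob_space M"
    and "p > 0" and "\<beta> > 0" and "q > 0" and "cbar > 0"
    and "prob_space.indep_vars M (\<lambda>_. borel)
           (\<lambda>i. case i of Inl n \<Rightarrow> E n | Inr n \<Rightarrow> U n) UNIV"
    and "\<And>n. distributed M lborel (E n) (exponential_density \<beta>)"
    and "\<And>n. U n \<in> borel_measurable M"
    and "\<And>n \<omega>. \<omega> \<in> space M \<Longrightarrow> U n \<omega> > 0"
    and "\<And>n y. measure M {\<omega> \<in> space M. U n \<omega> \<le> y} = F y"
    and "continuous_on UNIV F"
    and "\<And>a b. a < b \<Longrightarrow> 0 \<le> F b - F a \<and> F b - F a \<le> K * (b - a)"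
    and "integrable M (U 0)"
    and "p > \<beta> * prob_space.expectation M (U 0)"
    and "cbar > p"
  shows "\<exists>K2 > 0. \<exists>K3 > 0. \<forall>x1 x2 c. 0 \<le> x1 \<longrightarrow> x1 \<le> x2 \<longrightarrow> p < c \<longrightarrow> c \<le> cbar \<longrightarrow>
           Vfun M p q cbar E U x2 c - Vfun M p q cbar E U x1 c
             \<le> (K2 + K3 / (c - p)) * (x2 - x1)"
proof -
  interpret prob_space M by fact
  have "indep_vars (\<lambda>_. borel) E UNIV"
    using indep_vars_reindex[OF indep_vars_subset[OF assms(6) subset_UNIV], of Inl] by simp
  then have fin: "AE \<omega> in M. \<forall>t. finite {n. arrival E n \<omega> \<le> t}"
    by (rule AE_finite_arrivals[OF _ assms(7,3)])
  have "Vfun M p q cbar E U x2 c - Vfun M p q cbar E U x1 c \<le> (1 + cbar / (c - p)) * (x2 - x1)"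
    if "x1 \<le> x2" "p < c" "c \<le> cbar" for x1 x2 c
  proof -
    have "Vfun M p q cbar E U x2 c - Vfun M p q cbar E U x1 c \<le> cbar / (c - p) * (x2 - x1)"
      using assms(1,2,4) that fin assms(9) by (intro Vfun_diff_le) (auto intro: less_imp_le)
    also have "\<dots> \<le> (1 + cbar / (c - p)) * (x2 - x1)"
      using that by (intro mult_right_mono) auto
    finally show ?thesis .
  qed
  with \<open>0 < cbar\<close> show ?thesis
    by (intro exI[of _ 1] exI[of _ cbar]) auto
qed

end
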